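(* For every positive integer $r$, there exists a $2$-coverable connected binary matroid $M$ of rank $r$ such that in any rainbow circuit-free coloring of $M$ in which each color is used at most three times, the number of colors is at most $\lceil 6r/7\rceil$.
   Context: A coloring of the ground set is a partition into nonempty color classes; it is rainbow circuit-free if no circuit of $M$ has all its elements of pairwise different colors. A matroid is $k$-coverable if its ground set can be covered by at most $k$ independent sets. A matroid is connected if any two elements lie in a common circuit. A matroid is binary if it is representable over $GF(2)$. *)

theory Defs
  imports Complex_Main "HOL-Library.Z2"
begin

definition matroid :: "'a set \<Rightarrow> ('a set \<Rightarrow> bool) \<Rightarrow> bool" where
  "matroid E indep \<longleftrightarrow> finite E
     \<and> (\<forall>X. indep X \<longrightarrow> X \<subseteq> E)
     \<and> indep {}
     \<and> (\<forall>X Y. indep X \<and> Y \<subseteq> X \<longrightarrow> indep Y)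
     \<and> (\<forall>X Y. indep X \<and> indep Y \<and> card X < card Y \<longrightarrow> (\<exists>y\<in>Y - X. indep (insert y X)))"

definition circuit :: "'a set \<Rightarrow> ('a set \<Rightarrow> bool) \<Rightarrow> 'a set \<Rightarrow> bool" where
  "circuit E indep C \<longleftrightarrow> C \<subseteq> E \<and> \<not> indep C \<and> (\<forall>x\<in>C. indep (C - {x}))"

definition matroid_rank :: "'a set \<Rightarrow> ('a set \<Rightarrow> bool) \<Rightarrow> nat" where
  "matroid_rank E indep = Max (card ` {X. X \<subseteq> E \<and> indep X})"

text \<open>k-coverable: E is covered by at most k independent sets
  (the empty set is independent, so exactly k sets suffice).\<close>
definition coverable :: "nat \<Rightarrow> 'a set \<Rightarrow> ('a set \<Rightarrow> bool) \<Rightarrow> bool" where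
  "coverable k E indep \<longleftrightarrow>
     (\<exists>I :: nat \<Rightarrow> 'a set. (\<forall>i<k. indep (I i)) \<and> E \<subseteq> (\<Union>i<k. I i))"

definition matroid_connected :: "'a set \<Rightarrow> ('a set \<Rightarrow> bool) \<Rightarrow> bool" where
  "matroid_connected E indep \<longleftrightarrow>
     (\<forall>x\<in>E. \<forall>y\<in>E. x \<noteq> y \<longrightarrow> (\<exists>C. circuit E indep C \<and> x \<in> C \<and> y \<in> C))"

text \<open>Linear independence over GF(2) of the family (v x) for x in X, vectors in GF(2)^nat:
  a GF(2)-linear combination is the sum over a subset Y of X.\<close>
definition gf2_indep :: "('a \<Rightarrow> nat \<Rightarrow> bit) \<Rightarrow> 'a set \<Rightarrow> bool" where
  "gf2_indep v X \<longleftrightarrow>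
     (\<forall>Y. Y \<subseteq> X \<and> Y \<noteq> {} \<longrightarrow> (\<lambda>i. \<Sum>y\<in>Y. v y i) \<noteq> (\<lambda>i. 0))"

definition binary :: "'a set \<Rightarrow> ('a set \<Rightarrow> bool) \<Rightarrow> bool" where
  "binary E indep \<longleftrightarrow>
     (\<exists>v :: 'a \<Rightarrow> nat \<Rightarrow> bit. \<forall>X. X \<subseteq> E \<longrightarrow> (indep X \<longleftrightarrow> gf2_indep v X))"

text \<open>A colouring is a map c from the ground set to colours; the colour classes are the
  (nonempty) fibres on E, and the number of colours is card (c ` E).
  Rainbow circuit-free: no circuit has all its elements of pairwise different colours.\<close>
definition rainbow_circuit_free :: "'a set \<Rightarrow> ('a set \<Rightarrow> bool) \<Rightarrow> ('a \<Rightarrow> 'c) \<Rightarrow> bool" where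
  "rainbow_circuit_free E indep c \<longleftrightarrow> (\<nexists>C. circuit E indep C \<and> inj_on c C)"

end

theory Submission
  imports Defs "HOL-Library.Function_Algebras"
begin

(* Write r = 4m + s with 1 \<le> s \<le> 4. The matroid is represented over GF(2) by m disjoint
   copies of the affine geometry AG(3,2), s unit vectors and an apex vector, the sum of one
   point from every copy and of all the unit vectors. It has rank 4m + s and is covered by two
   independent sets. Two points of one copy lie on a common plane, which is a 4-circuit; any
   other two elements lie on a circuit through the apex that picks an odd set of points from
   each copy. Since planes are circuits, a rainbow circuit-free colouring with classes of size
   at most 3 uses at most 3 colours on each copy; the circuit through the apex and the points 0
   of all copies has m + s + 1 elements, hence at most m + s colours, and every copy adds at
   most 2 more. This gives at most 3m + s \<le> \<lceil>6r/7\<rceil> colours. *)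

section \<open>Matroids of vector families over GF(2)\<close>

definition gf2_scale :: "bit \<Rightarrow> (nat \<Rightarrow> bit) \<Rightarrow> nat \<Rightarrow> bit" where
  "gf2_scale a u = (\<lambda>i. a * u i)"

interpretation gf2: vector_space gf2_scale
  by unfold_locales (auto simp: gf2_scale_def fun_eq_iff algebra_simps)

lemma sum_apply: "sum f A i = (\<Sum>a\<in>A. f a i :: 'b::comm_monoid_add)"
  by (induction A rule: infinite_finite_induct) auto

lemma bit_add_self [simp]: "(x::bit) + x = 0"
  by (cases x) simp_all

lemma of_bool_add_of_bool: "(of_bool P :: bit) + of_bool Q = of_bool (P \<noteq> Q)"
  by (cases P; cases Q) simp_all

lemma of_bool_bit_eq_iff: "(of_bool P :: bit) = of_bool Q \<longleftrightarrow> P = Q"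
  by (cases P; cases Q) simp_all

lemma of_nat_bit: "(of_nat n :: bit) = of_bool (odd n)"
  by (induction n) (simp_all add: of_bool_add_of_bool)

lemma gf2_add_self [simp]: "(u::nat \<Rightarrow> bit) + u = 0"
  by (simp add: fun_eq_iff)

lemma gf2_eq_if_add_eq_0: "(u::nat \<Rightarrow> bit) + w = 0 \<Longrightarrow> u = w"
  by (metis add.assoc add_0 gf2_add_self)

lemma gf2_indep_iff_sum: "gf2_indep v X \<longleftrightarrow> (\<forall>Y. Y \<subseteq> X \<and> Y \<noteq> {} \<longrightarrow> (\<Sum>y\<in>Y. v y) \<noteq> 0)"
  unfolding gf2_indep_def by (simp add: fun_eq_iff sum_apply)

lemma gf2_indep_sum_neq_0: "gf2_indep v X \<Longrightarrow> Y \<subseteq> X \<Longrightarrow> Y \<noteq> {} \<Longrightarrow> (\<Sum>y\<in>Y. v y) \<noteq> 0"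
  unfolding gf2_indep_iff_sum by blast

lemma gf2_indep_subset: "gf2_indep v X \<Longrightarrow> Y \<subseteq> X \<Longrightarrow> gf2_indep v Y"
  unfolding gf2_indep_def by blast

lemma gf2_indep_finite:
  assumes "gf2_indep v X" shows "finite X"
proof (rule ccontr)
  assume "infinite X"
  then have "X \<noteq> {}" "(\<Sum>y\<in>X. v y) = 0" by auto
  with gf2_indep_sum_neq_0[OF assms] show False by blast
qed

lemma gf2_indep_inj_on:
  assumes "gf2_indep v X" shows "inj_on v X"
proof (rule inj_onI, rule ccontr)
  fix a b assume ab: "a \<in> X" "b \<in> X" "v a = v b" "a \<noteq> b"
  have "(\<Sum>y\<in>{a, b}. v y) = v a + v b"
    using ab(4) by simp
  also have "\<dots> = 0"
    unfolding ab(3) by (rule gf2_add_self)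
  finally show False
    using gf2_indep_sum_neq_0[OF assms, of "{a, b}"] ab(1,2) by simp
qed

lemma gf2_indep_imp_independent:
  assumes "gf2_indep v X" shows "gf2.independent (v ` X)"
proof
  assume "gf2.dependent (v ` X)"
  then obtain T u w where T: "finite T" "T \<subseteq> v ` X" "(\<Sum>w\<in>T. gf2_scale (u w) w) = 0"
    and w: "w \<in> T" "u w \<noteq> 0"
    unfolding gf2.dependent_explicit by blast
  define Y where "Y = {x\<in>X. v x \<in> T \<and> u (v x) = 1}"
  have "(\<Sum>w\<in>T. gf2_scale (u w) w) = (\<Sum>w\<in>T. if u w = 1 then w else 0)"
    by (intro sum.cong) (auto simp: gf2_scale_def fun_eq_iff)
  also have "\<dots> = (\<Sum>w\<in>{w\<in>T. u w = 1}. w)"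
    using T(1) by (simp add: sum.inter_filter)
  also have "\<dots> = (\<Sum>y\<in>Y. v y)"
    using T(2) gf2_indep_inj_on[OF assms]
    by (intro sum.reindex_cong[of v]) (auto simp: Y_def inj_on_def)
  finally have "(\<Sum>y\<in>Y. v y) = 0" using T(3) by simp
  moreover have "Y \<noteq> {}" "Y \<subseteq> X" using w T(2) by (auto simp: Y_def)
  ultimately show False using gf2_indep_sum_neq_0[OF assms] by blast
qed

lemma gf2_indep_insert_imp_span:
  assumes "gf2_indep v X" "\<not> gf2_indep v (insert y X)" "y \<notin> X"
  shows "v y \<in> gf2.span (v ` X)"
proof -
  obtain Z where Z: "Z \<subseteq> insert y X" "Z \<noteq> {}" "(\<Sum>z\<in>Z. v z) = 0"
    using assms(2) unfolding gf2_indep_iff_sum by blast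
  have "finite Z" using Z(1) gf2_indep_finite[OF assms(1)] finite_subset by auto
  have "y \<in> Z"
    using gf2_indep_sum_neq_0[OF assms(1), of Z] Z by blast
  then have "v y + (\<Sum>z\<in>Z - {y}. v z) = 0" using Z(3) \<open>finite Z\<close> by (simp add: sum.remove)
  then have "v y = (\<Sum>z\<in>Z - {y}. v z)" by (rule gf2_eq_if_add_eq_0)
  also have "\<dots> \<in> gf2.span (v ` X)"
    using Z(1) by (intro gf2.span_sum) (auto intro: gf2.span_base)
  finally show ?thesis .
qed

lemma card_le_if_gf2_indep_supported:
  assumes "gf2_indep v X" and support: "\<And>x k. x \<in> X \<Longrightarrow> n \<le> k \<Longrightarrow> v x k = 0"
  shows "card X \<le> n"
proof -
  define e where "e j = (\<lambda>k. of_bool (k = j) :: bit)" for j :: nat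
  have "v x \<in> gf2.span (e ` {..<n})" if "x \<in> X" for x
  proof -
    have "v x = (\<Sum>j<n. gf2_scale (v x j) (e j))"
    proof
      fix k
      have "(\<Sum>j<n. gf2_scale (v x j) (e j)) k = (\<Sum>j<n. if j = k then v x k else 0)"
        unfolding sum_apply by (intro sum.cong) (auto simp: gf2_scale_def e_def)
      also have "\<dots> = v x k"
        using support[OF that, of k] by (cases "k < n") auto
      finally show "v x k = (\<Sum>j<n. gf2_scale (v x j) (e j)) k" ..
    qed
    also have "\<dots> \<in> gf2.span (e ` {..<n})"
      by (intro gf2.span_sum gf2.span_scale gf2.span_base) auto
    finally show ?thesis .
  qed
  then have "card (v ` X) \<le> card (e ` {..<n})"
    using gf2.independent_span_bound[OF _ gf2_indep_imp_independent[OF assms(1)]] by auto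
  also have "\<dots> \<le> n"
    using card_image_le[of "{..<n}" e] by simp
  finally show ?thesis
    using card_image[OF gf2_indep_inj_on[OF assms(1)]] by simp
qed

definition vec_indep :: "'a set \<Rightarrow> ('a \<Rightarrow> nat \<Rightarrow> bit) \<Rightarrow> 'a set \<Rightarrow> bool" where
  "vec_indep E v X \<longleftrightarrow> X \<subseteq> E \<and> gf2_indep v X"

lemma binary_vec_indep: "binary E (vec_indep E v)"
  unfolding binary_def vec_indep_def by blast

lemma matroid_vec_indep:
  assumes "finite E" shows "matroid E (vec_indep E v)"
  unfolding matroid_def
proof (intro conjI allI impI)
  show "vec_indep E v {}" by (simp add: vec_indep_def gf2_indep_def)
next
  fix X Y assume "vec_indep E v X \<and> Y \<subseteq> X"
  then show "vec_indep E v Y" by (auto simp: vec_indep_def intro: gf2_indep_subset)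
next
  fix X Y assume H: "vec_indep E v X \<and> vec_indep E v Y \<and> card X < card Y"
  then have X: "gf2_indep v X" "X \<subseteq> E" and Y: "gf2_indep v Y" "Y \<subseteq> E"
    by (auto simp: vec_indep_def)
  show "\<exists>y\<in>Y - X. vec_indep E v (insert y X)"
  proof (rule ccontr)
    assume "\<not> ?thesis"
    then have "v y \<in> gf2.span (v ` X)" if "y \<in> Y" for y
      using that X Y gf2_indep_insert_imp_span[OF X(1)] gf2.span_base
      by (cases "y \<in> X") (auto simp: vec_indep_def)
    then have "card (v ` Y) \<le> card (v ` X)"
      using gf2.independent_span_bound[OF _ gf2_indep_imp_independent[OF Y(1)]]
        gf2_indep_finite[OF X(1)] by auto
    then have "card Y \<le> card X"
      using card_image[OF gf2_indep_inj_on[OF X(1)]] card_image[OF gf2_indep_inj_on[OF Y(1)]] by simp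
    with H show False by simp
  qed
qed (use assms in \<open>auto simp: vec_indep_def\<close>)

lemma circuit_vec_indepI:
  assumes "C \<subseteq> E" "finite C" "(\<Sum>y\<in>C. v y) = 0" "x \<in> C" "gf2_indep v (C - {x})"
  shows "circuit E (vec_indep E v) C"
proof -
  have "gf2_indep v (C - {y})" if "y \<in> C" for y
    unfolding gf2_indep_iff_sum
  proof (intro allI impI notI)
    fix Y assume Y: "Y \<subseteq> C - {y} \<and> Y \<noteq> {}" and sum_Y: "(\<Sum>y\<in>Y. v y) = 0"
    show False
    proof (cases "x \<in> Y")
      case False
      with Y sum_Y gf2_indep_sum_neq_0[OF assms(5), of Y] show False by blast
    next
      case True
      \<comment> \<open>then the complement C - Y is a zero-sum subset of C - {x}\<close>
      have "(\<Sum>y\<in>C. v y) = (\<Sum>y\<in>C - Y. v y) + (\<Sum>y\<in>Y. v y)"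
        using Y assms(2) by (intro sum.subset_diff) auto
      then have "(\<Sum>y\<in>C - Y. v y) = 0"
        using assms(3) sum_Y by simp
      moreover have "C - Y \<subseteq> C - {x}" "C - Y \<noteq> {}"
        using True Y that by auto
      ultimately show False
        using gf2_indep_sum_neq_0[OF assms(5)] by blast
    qed
  qed
  moreover have "\<not> gf2_indep v C"
    using gf2_indep_sum_neq_0[of v C C] assms(3,4) by blast
  ultimately show ?thesis
    using assms(1) unfolding circuit_def vec_indep_def by auto
qed

lemma matroid_rank_vec_indep:
  assumes "finite E" and support: "\<And>x k. x \<in> E \<Longrightarrow> n \<le> k \<Longrightarrow> v x k = 0"
    and B: "B \<subseteq> E" "gf2_indep v B" "card B = n"
  shows "matroid_rank E (vec_indep E v) = n"
  unfolding matroid_rank_def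
proof (rule Max_eqI)
  show "finite (card ` {X. X \<subseteq> E \<and> vec_indep E v X})"
    using assms(1) by simp
  show "n \<in> card ` {X. X \<subseteq> E \<and> vec_indep E v X}"
    using B by (auto simp: vec_indep_def)
qed (auto simp: vec_indep_def intro!: card_le_if_gf2_indep_supported support)

section \<open>Colourings of the affine geometry AG(3,2)\<close>

(* The points of AG(3,2) are 0, ..., 7 with addition xor; the planes are the sets
   {a, b, c, xor a (xor b c)} of four distinct points. *)

lemma xor_left_self [simp]: "xor (a::nat) (xor a b) = b"
  by (simp flip: xor.assoc)

lemma xor_left_cancel_iff [simp]: "xor (a::nat) b = xor a c \<longleftrightarrow> b = c"
  by (metis xor_left_self)

lemma xor_eq_self_iff [simp]: "a = xor a b \<longleftrightarrow> b = (0::nat)"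
  using xor_left_cancel_iff[of a 0 b] by auto

lemma xor_eq_self_iff' [simp]: "b = xor a b \<longleftrightarrow> a = (0::nat)"
  by (metis xor.commute xor_eq_self_iff)

lemma xor_eq_0_iff [simp]: "xor (a::nat) b = 0 \<longleftrightarrow> a = b"
  using xor_left_cancel_iff[of a b a] by auto

lemma neq_if_xor_neq_0: "xor x y \<noteq> 0 \<Longrightarrow> x \<noteq> (y::nat)"
  by auto

lemma xor_less_8:
  assumes "(a::nat) < 8" "b < 8" shows "xor a b < 8"
proof -
  have "take_bit 3 a = a" "take_bit 3 b = b"
    using assms by (simp_all add: take_bit_nat_eq_self_iff)
  then have "take_bit 3 (xor a b) = xor a b"
    by (metis take_bit_xor)
  then have "xor a b < 2 ^ 3"
    by (metis take_bit_nat_eq_self_iff)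
  then show ?thesis
    by simp
qed

lemmas xor_ac = xor.assoc xor.commute xor.left_commute

lemma distinct_xor_translates:
  assumes "distinct [a, b, c, d :: nat]"
  defines "S \<equiv> xor a (xor b (xor c d))"
  shows "distinct [a, xor b S, xor c S, xor d S]"
  using assms unfolding S_def
  by (simp only: distinct.simps list.set insert_iff empty_iff de_Morgan_disj simp_thms)
    (intro conjI; rule neq_if_xor_neq_0; simp add: xor_ac)

lemma distinct_plane:
  assumes "distinct [a, b, c :: nat]"
  shows "distinct [a, b, c, xor a (xor b c)]"
proof -
  have "a \<noteq> xor a (xor b c)" "b \<noteq> xor a (xor b c)" "c \<noteq> xor a (xor b c)"
    by (rule neq_if_xor_neq_0; use assms in \<open>simp add: xor_ac\<close>)+
  with assms show ?thesis
    by simp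
qed

(* The colour constraints imposed on the translates A', B', C', D' of four points with
   distinct colours A, B, C, D; checked over the 81 possible choices of A', ..., D'. *)
lemma AG32_colour_pattern_impossible:
  fixes A B C D A' B' C' D' :: 'c
  assumes "distinct [A, B, C, D]"
    and "A' \<in> {B, C, D}" "B' \<in> {A, C, D}" "C' \<in> {A, B, D}" "D' \<in> {A, B, C}"
    and "A' = B \<or> B' \<in> {A, B, A'}" "A' = C \<or> C' \<in> {A, C, A'}" "A' = D \<or> D' \<in> {A, D, A'}"
      "B' = C \<or> C' \<in> {B, C, B'}" "B' = D \<or> D' \<in> {B, D, B'}" "C' = D \<or> D' \<in> {C, D, C'}"
    and "\<not> (B' = A \<and> C' = A \<and> D' = A)" "\<not> (A' = B \<and> C' = B \<and> D' = B)"
      "\<not> (A' = C \<and> B' = C \<and> D' = C)" "\<not> (A' = D \<and> B' = D \<and> C' = D)"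
  shows False
  using assms(2-5) by (elim insertE singletonE emptyE; use assms in auto)

lemma not_four_in_small_colour_class:
  assumes "card {b. b < 8 \<and> f b = f x} \<le> 3" "distinct [x, y, z, w]" "x < 8" "y < 8" "z < 8" "w < (8::nat)"
  shows "\<not> (f y = f x \<and> f z = f x \<and> f w = f x)"
proof
  assume "f y = f x \<and> f z = f x \<and> f w = f x"
  then have "{x, y, z, w} \<subseteq> {b. b < 8 \<and> f b = f x}"
    using assms(3-6) by auto
  then have "card {x, y, z, w} \<le> card {b. b < 8 \<and> f b = f x}"
    by (intro card_mono) auto
  with assms(1,2) show False
    by simp
qed

(* If a, b, c, d have four distinct colours, the remaining points are the translates
   x' = xor x S with S = xor a (xor b (xor c d)): the completion of any three of a, b, c, d to a plane is
   the translate of the fourth, and {x, y, x', y'} is a plane for all x, y. *)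
lemma AG32_four_colours_impossible:
  fixes f :: "nat \<Rightarrow> 'c"
  assumes no_rainbow: "\<And>a b c. a < 8 \<Longrightarrow> b < 8 \<Longrightarrow> c < 8 \<Longrightarrow> f a \<noteq> f b \<Longrightarrow> f a \<noteq> f c \<Longrightarrow> f b \<noteq> f c
      \<Longrightarrow> f (xor a (xor b c)) \<in> {f a, f b, f c}"
    and cap: "\<And>a. a < 8 \<Longrightarrow> card {b. b < 8 \<and> f b = f a} \<le> 3"
    and lt: "a < 8" "b < 8" "c < 8" "d < 8"
    and distinct: "distinct [f a, f b, f c, f d]"
  shows False
proof -
  define S where "S = xor a (xor b (xor c d))"
  define a' b' c' d' where "a' = xor a S" and "b' = xor b S" and "c' = xor c S" and "d' = xor d S"
  have a'_eq: "a' = xor b (xor c d)" and b'_eq: "b' = xor a (xor c d)"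
    and c'_eq: "c' = xor a (xor b d)" and d'_eq: "d' = xor a (xor b c)"
    unfolding a'_def b'_def c'_def d'_def S_def by (simp_all add: xor_ac)
  have lt': "a' < 8" "b' < 8" "c' < 8" "d' < 8"
    using lt by (simp_all add: a'_eq b'_eq c'_eq d'_eq xor_less_8)
  have completions: "f a' \<in> {f b, f c, f d}" "f b' \<in> {f a, f c, f d}"
    "f c' \<in> {f a, f b, f d}" "f d' \<in> {f a, f b, f c}"
    using no_rainbow[of b c d] no_rainbow[of a c d] no_rainbow[of a b d] no_rainbow[of a b c]
      lt distinct unfolding a'_eq b'_eq c'_eq d'_eq by auto
  have pair: "f x' = f y \<or> f y' \<in> {f x, f y, f x'}"
    if "x < 8" "y < 8" "x' < 8" "f x \<noteq> f y" "f x' \<noteq> f x" "xor x (xor y x') = y'" for x y x' y'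
    using no_rainbow[of x y x'] that by auto
  have planes: "xor a (xor b a') = b'" "xor a (xor c a') = c'" "xor a (xor d a') = d'"
    "xor b (xor c b') = c'" "xor b (xor d b') = d'" "xor c (xor d c') = d'"
    unfolding a'_def b'_def c'_def d'_def by (simp_all add: xor_ac)
  have pairs: "f a' = f b \<or> f b' \<in> {f a, f b, f a'}" "f a' = f c \<or> f c' \<in> {f a, f c, f a'}"
    "f a' = f d \<or> f d' \<in> {f a, f d, f a'}" "f b' = f c \<or> f c' \<in> {f b, f c, f b'}"
    "f b' = f d \<or> f d' \<in> {f b, f d, f b'}" "f c' = f d \<or> f d' \<in> {f c, f d, f c'}"
    using pair[OF lt(1,2) lt'(1) _ _ planes(1)] pair[OF lt(1,3) lt'(1) _ _ planes(2)]
      pair[OF lt(1,4) lt'(1) _ _ planes(3)] pair[OF lt(2,3) lt'(2) _ _ planes(4)]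
      pair[OF lt(2,4) lt'(2) _ _ planes(5)] pair[OF lt(3,4) lt'(3) _ _ planes(6)]
      completions distinct by auto
  have S_perm: "xor b (xor a (xor c d)) = S" "xor c (xor a (xor b d)) = S" "xor d (xor a (xor b c)) = S"
    unfolding S_def by (simp_all add: xor_ac)
  have "distinct [a, b, c, d]"
    using distinct by auto
  then have translates: "distinct [a, b', c', d']" "distinct [b, a', c', d']"
    "distinct [c, a', b', d']" "distinct [d, a', b', c']"
    using distinct_xor_translates[of a b c d] distinct_xor_translates[of b a c d]
      distinct_xor_translates[of c a b d] distinct_xor_translates[of d a b c]
    unfolding S_perm S_def[symmetric] a'_def[symmetric] b'_def[symmetric] c'_def[symmetric] d'_def[symmetric]
    by auto
  show False
    using not_four_in_small_colour_class[OF cap[OF lt(1)] translates(1) lt(1) lt'(2-4)]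
      not_four_in_small_colour_class[OF cap[OF lt(2)] translates(2) lt(2) lt'(1,3,4)]
      not_four_in_small_colour_class[OF cap[OF lt(3)] translates(3) lt(3) lt'(1,2,4)]
      not_four_in_small_colour_class[OF cap[OF lt(4)] translates(4) lt(4) lt'(1-3)]
    by (rule AG32_colour_pattern_impossible[OF distinct completions pairs])
qed

lemma four_distinct_values:
  assumes "4 \<le> card (f ` A)"
  obtains a b c d where "a \<in> A" "b \<in> A" "c \<in> A" "d \<in> A" "distinct [f a, f b, f c, f d]"
proof -
  obtain T where T: "T \<subseteq> f ` A" "card T = Suc 3"
    using obtain_subset_with_card_n[OF assms] by auto
  obtain x T' where "T = insert x T'" "x \<notin> T'" "card T' = 3"
    using card_eq_SucD[OF T(2)] by blast
  moreover obtain y z w where "T' = {y, z, w}" "y \<noteq> z" "z \<noteq> w" "y \<noteq> w"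
    using \<open>card T' = 3\<close> card_3_iff by metis
  ultimately have "x \<in> f ` A" "y \<in> f ` A" "z \<in> f ` A" "w \<in> f ` A" "distinct [x, y, z, w]"
    using T(1) by auto
  then show ?thesis
    using that by blast
qed

lemma card_AG32_colours_le_3:
  fixes f :: "nat \<Rightarrow> 'c"
  assumes "\<And>a b c. a < 8 \<Longrightarrow> b < 8 \<Longrightarrow> c < 8 \<Longrightarrow> f a \<noteq> f b \<Longrightarrow> f a \<noteq> f c \<Longrightarrow> f b \<noteq> f c
      \<Longrightarrow> f (xor a (xor b c)) \<in> {f a, f b, f c}"
    and "\<And>a. a < 8 \<Longrightarrow> card {b. b < 8 \<and> f b = f a} \<le> 3"
  shows "card (f ` {..<8}) \<le> 3"
proof (rule ccontr)
  assume "\<not> ?thesis"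
  then have "4 \<le> card (f ` {..<8})"
    by simp
  then obtain a b c d where "a \<in> {..<8}" "b \<in> {..<8}" "c \<in> {..<8}" "d \<in> {..<8}"
    and "distinct [f a, f b, f c, f d]"
    by (rule four_distinct_values)
  with AG32_four_colours_impossible[OF assms, of a b c d] show False
    by simp
qed

section \<open>The construction\<close>

(* Point p < 8 of AG(3,2) as the vector (1, p\<^sub>0, p\<^sub>1, p\<^sub>2) of GF(2)^4, where p\<^sub>i are the binary
   digits of p; four distinct points sum to zero iff they form a plane. *)
definition ag_point :: "nat \<Rightarrow> nat \<Rightarrow> bit" where
  "ag_point p k = (if k = 0 then 1 else if k < 4 then of_bool (bit p (k - 1)) else 0)"

lemma ag_point_eq_0 [simp]: "4 \<le> k \<Longrightarrow> ag_point p k = 0"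
  by (simp add: ag_point_def)

lemma ag_point_xor: "ag_point a + ag_point b + ag_point c = ag_point (xor a (xor b c))"
  by (auto simp: fun_eq_iff ag_point_def bit_xor_iff of_bool_add_of_bool)

lemma inj_on_ag_point: "inj_on ag_point {..<8}"
proof (rule inj_onI)
  fix a b assume ab: "a \<in> {..<8}" "b \<in> {..<8}" "ag_point a = ag_point b"
  have "bit a t = bit b t" for t
  proof (cases "t < 3")
    case True
    then show ?thesis
      using fun_cong[OF ab(3), of "Suc t"] by (simp add: ag_point_def of_bool_bit_eq_iff)
  next
    case False
    then have "(2::nat) ^ 3 \<le> 2 ^ t"
      by (intro power_increasing) auto
    then show ?thesis
      using ab(1,2) by (simp add: bit_iff_odd)
  qed
  then show "a = b"
    by (simp add: bit_eq_iff)
qed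

lemma sum_ag_point_neq_0:
  assumes "Z \<subseteq> {..<8}" "Z \<noteq> {}" "card Z \<le> 3"
  shows "(\<Sum>z\<in>Z. ag_point z) \<noteq> 0"
proof
  assume sum_0: "(\<Sum>z\<in>Z. ag_point z) = 0"
  have "finite Z"
    using assms(1) finite_subset by blast
  then have "card Z \<noteq> 0"
    using assms(2) by simp
  have "(\<Sum>z\<in>Z. ag_point z) 0 = of_nat (card Z)"
    by (simp add: sum_apply ag_point_def)
  then have "even (card Z)"
    using sum_0 by (simp add: of_nat_bit)
  with \<open>card Z \<noteq> 0\<close> assms(3) have "card Z = 2"
    by presburger
  then obtain a b where Z: "Z = {a, b}" "a \<noteq> b"
    by (meson card_2_iff)
  then have "ag_point a + ag_point b = 0"
    using sum_0 by simp
  then have "ag_point a = ag_point b"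
    by (rule gf2_eq_if_add_eq_0)
  with Z assms(1) inj_on_ag_point show False
    by (auto dest: inj_onD)
qed

lemma gf2_indep_ag_point:
  assumes "Z \<subseteq> {..<8}" "card Z \<le> 4" "card Z = 4 \<Longrightarrow> (\<Sum>z\<in>Z. ag_point z) \<noteq> 0"
  shows "gf2_indep ag_point Z"
  unfolding gf2_indep_iff_sum
proof (intro allI impI)
  fix Y assume Y: "Y \<subseteq> Z \<and> Y \<noteq> {}"
  have "finite Z"
    using assms(1) finite_subset by blast
  then have "card Y \<le> card Z"
    using Y card_mono by blast
  show "(\<Sum>y\<in>Y. ag_point y) \<noteq> 0"
  proof (cases "card Y = 4")
    case True
    then have "Y = Z"
      using Y \<open>finite Z\<close> \<open>card Y \<le> card Z\<close> assms(2) by (metis card_subset_eq le_antisym)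
    with True assms(3) show ?thesis
      by simp
  next
    case False
    with \<open>card Y \<le> card Z\<close> assms(1,2) Y show ?thesis
      by (intro sum_ag_point_neq_0) auto
  qed
qed

lemma gf2_indep_ag_point_card_le_3: "Z \<subseteq> {..<8} \<Longrightarrow> card Z \<le> 3 \<Longrightarrow> gf2_indep ag_point Z"
  by (rule gf2_indep_ag_point) auto

definition block_vec :: "nat \<Rightarrow> (nat \<Rightarrow> bit) \<Rightarrow> nat \<Rightarrow> bit" where
  "block_vec i u k = (if k div 4 = i then u (k mod 4) else 0)"

definition apex_vec :: "nat \<Rightarrow> nat \<Rightarrow> nat \<Rightarrow> bit" where
  "apex_vec m s k = (if k < 4 * m then of_bool (k mod 4 = 0) else of_bool (k < 4 * m + s))"

(* Element 8 * i + p (i < m, p < 8) is point p of the i-th copy of AG(3,2), which uses the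
   coordinates 4 * i, ..., 4 * i + 3; element 8 * m + j (j < s) is the unit vector at
   coordinate 4 * m + j; element 8 * m + s is the apex, the sum of the points 0 of all copies and
   of all unit vectors. *)
definition rep :: "nat \<Rightarrow> nat \<Rightarrow> nat \<Rightarrow> nat \<Rightarrow> bit" where
  "rep m s n =
    (if n < 8 * m then block_vec (n div 8) (ag_point (n mod 8))
     else if n < 8 * m + s then (\<lambda>k. of_bool (k = 4 * m + (n - 8 * m)))
     else if n = 8 * m + s then apex_vec m s
     else 0)"

definition ground :: "nat \<Rightarrow> nat \<Rightarrow> nat set" where
  "ground m s = {..8 * m + s}"

abbreviation rep_indep :: "nat \<Rightarrow> nat \<Rightarrow> nat set \<Rightarrow> bool" where
  "rep_indep m s \<equiv> vec_indep (ground m s) (rep m s)"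

definition block_points :: "nat set \<Rightarrow> nat \<Rightarrow> nat set" where
  "block_points Y i = {p. p < 8 \<and> 8 * i + p \<in> Y}"

definition block_set :: "nat \<Rightarrow> (nat \<Rightarrow> nat set) \<Rightarrow> nat set" where
  "block_set m T = (\<Union>i<m. (\<lambda>p. 8 * i + p) ` T i)"

lemma finite_ground [simp]: "finite (ground m s)"
  by (simp add: ground_def)

lemma rep_apex: "rep m s (8 * m + s) = apex_vec m s"
  by (simp add: rep_def)

lemma rep_apply_block_coord:
  assumes "n < 8 * m + s" "k < 4 * m"
  shows "rep m s n k = (if n div 8 = k div 4 then ag_point (n mod 8) (k mod 4) else 0)"
proof (cases "n < 8 * m")
  case False
  have "k div 4 < m"
    using assms(2) by (simp add: less_mult_imp_div_less mult.commute)
  moreover have "m \<le> n div 8"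
    using False div_le_mono[of "8 * m" n 8] by simp
  ultimately have "n div 8 \<noteq> k div 4"
    by simp
  with False assms show ?thesis
    by (simp add: rep_def)
qed (auto simp: rep_def block_vec_def)

lemma rep_apply_free_coord:
  assumes "n < 8 * m + s" "4 * m \<le> k"
  shows "rep m s n k = of_bool (n = 8 * m + (k - 4 * m))"
proof (cases "n < 8 * m")
  case True
  have "n div 8 < m"
    using True by (simp add: less_mult_imp_div_less mult.commute)
  moreover have "m \<le> k div 4"
    using assms(2) div_le_mono[of "4 * m" k 4] by simp
  ultimately have "n div 8 < k div 4"
    by simp
  with True show ?thesis
    by (auto simp: rep_def block_vec_def)
qed (use assms in \<open>auto simp: rep_def\<close>)

lemma sum_rep_apply:
  assumes "Y \<subseteq> {..<8 * m + s}"
  shows "(\<Sum>y\<in>Y. rep m s y) k =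
    (if k < 4 * m then (\<Sum>p\<in>block_points Y (k div 4). ag_point p) (k mod 4)
     else of_bool (8 * m + (k - 4 * m) \<in> Y))"
proof -
  have "finite Y"
    using assms finite_subset by blast
  show ?thesis
  proof (cases "k < 4 * m")
    case True
    let ?i = "k div 4"
    have "(\<Sum>y\<in>Y. rep m s y) k = (\<Sum>y\<in>Y. if y div 8 = ?i then ag_point (y mod 8) (k mod 4) else 0)"
      unfolding sum_apply using assms True by (intro sum.cong) (auto simp: rep_apply_block_coord)
    also have "\<dots> = (\<Sum>y\<in>{y\<in>Y. y div 8 = ?i}. ag_point (y mod 8) (k mod 4))"
      using \<open>finite Y\<close> by (simp add: sum.inter_filter)
    also have "{y\<in>Y. y div 8 = ?i} = (\<lambda>p. 8 * ?i + p) ` block_points Y ?i"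
      by (auto simp: block_points_def image_iff) (metis div_mult_mod_eq mod_less_divisor mult.commute zero_less_numeral)
    also have "(\<Sum>y\<in>\<dots>. ag_point (y mod 8) (k mod 4)) = (\<Sum>p\<in>block_points Y ?i. ag_point p (k mod 4))"
      by (intro sum.reindex_cong[of "\<lambda>p. 8 * ?i + p"]) (auto simp: inj_on_def block_points_def)
    finally show ?thesis
      using True by (simp add: sum_apply)
  next
    case False
    have "(\<Sum>y\<in>Y. rep m s y) k = (\<Sum>y\<in>Y. of_bool (y = 8 * m + (k - 4 * m)))"
      unfolding sum_apply using assms False by (intro sum.cong) (auto simp: rep_apply_free_coord)
    also have "\<dots> = of_bool (8 * m + (k - 4 * m) \<in> Y)"
      using \<open>finite Y\<close> by (simp add: of_bool_def sum.delta')
    finally show ?thesis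
      using False by simp
  qed
qed

lemma block_elem_div [simp]: "(p::nat) < 8 \<Longrightarrow> (8 * i + p) div 8 = i"
  and block_elem_mod [simp]: "(p::nat) < 8 \<Longrightarrow> (8 * i + p) mod 8 = p"
  by simp_all

lemma block_elem_eq_iff [simp]: "(p::nat) < 8 \<Longrightarrow> q < 8 \<Longrightarrow> 8 * i + p = 8 * j + q \<longleftrightarrow> i = j \<and> p = q"
  by (metis block_elem_div block_elem_mod)

lemma block_points_Un: "block_points (A \<union> B) i = block_points A i \<union> block_points B i"
  by (auto simp: block_points_def)

lemma block_points_image:
  "P \<subseteq> {..<8} \<Longrightarrow> block_points ((\<lambda>p. 8 * i + p) ` P) j = (if j = i then P else {})"
  by (auto simp: block_points_def)

lemma block_points_block_set:
  assumes bound: "\<And>i. i < m \<Longrightarrow> T i \<subseteq> {..<8}" and "j < m"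
  shows "block_points (block_set m T) j = T j"
proof (intro set_eqI iffI)
  fix p assume "p \<in> block_points (block_set m T) j"
  then obtain i q where "i < m" "q \<in> T i" "p < 8" "8 * j + p = 8 * i + q"
    by (auto simp: block_points_def block_set_def)
  moreover have "q < 8"
    using bound \<open>i < m\<close> \<open>q \<in> T i\<close> by blast
  ultimately show "p \<in> T j"
    by simp
next
  fix p assume "p \<in> T j"
  then show "p \<in> block_points (block_set m T) j"
    using bound \<open>j < m\<close> by (auto simp: block_points_def block_set_def)
qed

lemma block_points_eq_empty: "A \<inter> {..<8 * m} = {} \<Longrightarrow> j < m \<Longrightarrow> block_points A j = {}"
  by (auto simp: block_points_def)

lemma block_set_subset: "(\<And>i. i < m \<Longrightarrow> T i \<subseteq> {..<8}) \<Longrightarrow> block_set m T \<subseteq> {..<8 * m}"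
  by (force simp: block_set_def)

lemma mem_block_set_iff:
  assumes bound: "\<And>i. i < m \<Longrightarrow> T i \<subseteq> {..<8}" and "n < 8 * m"
  shows "n \<in> block_set m T \<longleftrightarrow> n mod 8 \<in> T (n div 8)"
proof
  assume "n \<in> block_set m T"
  then obtain i p where "i < m" "p \<in> T i" "n = 8 * i + p"
    unfolding block_set_def by blast
  moreover have "p < 8"
    using bound \<open>i < m\<close> \<open>p \<in> T i\<close> by blast
  ultimately show "n mod 8 \<in> T (n div 8)"
    by simp
next
  assume "n mod 8 \<in> T (n div 8)"
  moreover have "n div 8 \<in> {..<m}"
    using \<open>n < 8 * m\<close> by (simp add: less_mult_imp_div_less mult.commute)
  ultimately show "n \<in> block_set m T"
    unfolding block_set_def by (intro UN_I[of "n div 8"] image_eqI[of n _ "n mod 8"]) simp_all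
qed

lemma card_block_set:
  assumes bound: "\<And>i. i < m \<Longrightarrow> T i \<subseteq> {..<8}"
  shows "card (block_set m T) = (\<Sum>i<m. card (T i))"
proof -
  have "8 * i + p \<noteq> 8 * j + q" if "i < m" "j < m" "i \<noteq> j" "p \<in> T i" "q \<in> T j" for i j p q
  proof -
    have "p < 8" "q < 8"
      using bound[OF that(1)] bound[OF that(2)] that(4,5) by auto
    with that(3) show ?thesis
      by simp
  qed
  moreover have "finite (T i)" if "i < m" for i
    using bound[OF that] finite_subset by blast
  ultimately have "card (block_set m T) = (\<Sum>i<m. card ((\<lambda>p. 8 * i + p) ` T i))"
    unfolding block_set_def by (intro card_UN_disjoint) auto
  also have "\<dots> = (\<Sum>i<m. card (T i))"
    by (intro sum.cong refl card_image) (auto simp: inj_on_def)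
  finally show ?thesis .
qed

lemma gf2_indep_rep:
  assumes "X \<subseteq> {..<8 * m + s}" and blocks: "\<And>i. i < m \<Longrightarrow> gf2_indep ag_point (block_points X i)"
  shows "gf2_indep (rep m s) X"
  unfolding gf2_indep_iff_sum
proof (intro allI impI)
  fix Y assume Y: "Y \<subseteq> X \<and> Y \<noteq> {}"
  then have YX: "Y \<subseteq> {..<8 * m + s}"
    using assms(1) by blast
  show "(\<Sum>y\<in>Y. rep m s y) \<noteq> 0"
  proof (cases "\<exists>y\<in>Y. 8 * m \<le> y")
    case True
    then obtain y where y: "y \<in> Y" "8 * m \<le> y"
      by blast
    have "(\<Sum>y\<in>Y. rep m s y) (4 * m + (y - 8 * m)) = 1"
      using sum_rep_apply[OF YX] y by simp
    then show ?thesis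
      by auto
  next
    case False
    then obtain y where y: "y \<in> Y" "y < 8 * m"
      using Y by (meson not_le all_not_in_conv)
    define i where "i = y div 8"
    have "i < m"
      using y(2) by (simp add: i_def less_mult_imp_div_less mult.commute)
    have "y mod 8 \<in> block_points Y i" "block_points Y i \<subseteq> block_points X i"
      using y Y by (auto simp: block_points_def i_def)
    then have "(\<Sum>p\<in>block_points Y i. ag_point p) \<noteq> 0"
      using gf2_indep_sum_neq_0[OF blocks[OF \<open>i < m\<close>]] by blast
    then obtain k where k: "(\<Sum>p\<in>block_points Y i. ag_point p) k \<noteq> 0"
      by (auto simp: fun_eq_iff)
    then have "k < 4"
      by (cases "k < 4") (simp_all add: sum_apply)
    then have "(\<Sum>y\<in>Y. rep m s y) (4 * i + k) \<noteq> 0"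
      using sum_rep_apply[OF YX, of "4 * i + k"] k \<open>i < m\<close> by simp
    then show ?thesis
      by auto
  qed
qed

lemma gf2_indep_insert_apex:
  assumes "gf2_indep (rep m s) X" "X \<subseteq> {..<8 * m}" "0 < s"
  shows "gf2_indep (rep m s) (insert (8 * m + s) X)"
  unfolding gf2_indep_iff_sum
proof (intro allI impI)
  fix Y assume Y: "Y \<subseteq> insert (8 * m + s) X \<and> Y \<noteq> {}"
  show "(\<Sum>y\<in>Y. rep m s y) \<noteq> 0"
  proof (cases "8 * m + s \<in> Y")
    case False
    with Y gf2_indep_sum_neq_0[OF assms(1)] show ?thesis
      by blast
  next
    case True
    have rest: "Y - {8 * m + s} \<subseteq> {..<8 * m}"
      using Y assms(2) by blast
    then have "Y - {8 * m + s} \<subseteq> {..<8 * m + s}" "8 * m \<notin> Y - {8 * m + s}"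
      by auto
    then have "(\<Sum>y\<in>Y - {8 * m + s}. rep m s y) (4 * m) = 0"
      by (simp add: sum_rep_apply)
    have "finite Y"
      using rest finite_subset by (metis finite_insert finite_lessThan insert_Diff_single subset_insertI2)
    then have "(\<Sum>y\<in>Y. rep m s y) = apex_vec m s + (\<Sum>y\<in>Y - {8 * m + s}. rep m s y)"
      using True by (simp add: sum.remove rep_apex)
    moreover note \<open>(\<Sum>y\<in>Y - {8 * m + s}. rep m s y) (4 * m) = 0\<close>
    ultimately have "(\<Sum>y\<in>Y. rep m s y) (4 * m) = 1"
      using assms(3) by (simp add: apex_vec_def)
    then show ?thesis
      by auto
  qed
qed

lemma sum_ag_point_plane:
  assumes "distinct [a, b, c, d]" "d = xor a (xor b c)"
  shows "(\<Sum>p\<in>{a, b, c, d}. ag_point p) = 0"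
proof -
  have "(\<Sum>p\<in>{a, b, c, d}. ag_point p) = (ag_point a + ag_point b + ag_point c) + ag_point d"
    using assms(1) by (simp add: add.assoc)
  also have "\<dots> = 0"
    unfolding ag_point_xor assms(2) by (rule gf2_add_self)
  finally show ?thesis .
qed

lemma circuit_plane:
  assumes "i < m" "a < 8" "b < 8" "c < 8" "distinct [a, b, c]"
  shows "circuit (ground m s) (rep_indep m s) ((\<lambda>p. 8 * i + p) ` {a, b, c, xor a (xor b c)})"
proof -
  define d where "d = xor a (xor b c)"
  have "d < 8"
    using assms(2-4) by (simp add: d_def xor_less_8)
  have distinct: "distinct [a, b, c, d]"
    using distinct_plane[OF assms(5)] by (simp add: d_def)
  let ?C = "(\<lambda>p. 8 * i + p) ` {a, b, c, d}"
  have C_sub: "?C \<subseteq> {..<8 * m}"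
    using assms(1-4) \<open>d < 8\<close> by auto
  have C_points: "block_points ?C j = (if j = i then {a, b, c, d} else {})" for j
    using assms(2-4) \<open>d < 8\<close> by (intro block_points_image) auto
  have "(\<Sum>y\<in>?C. rep m s y) = 0"
  proof
    fix k
    have "?C \<subseteq> {..<8 * m + s}"
      using C_sub by auto
    with C_sub show "(\<Sum>y\<in>?C. rep m s y) k = 0 k"
      unfolding sum_rep_apply[OF \<open>?C \<subseteq> {..<8 * m + s}\<close>] C_points
      using sum_ag_point_plane[OF distinct d_def] by auto
  qed
  moreover have "gf2_indep (rep m s) (?C - {8 * i + d})"
  proof (rule gf2_indep_rep)
    have "?C - {8 * i + d} = (\<lambda>p. 8 * i + p) ` {a, b, c}"
      using distinct by auto
    moreover have "block_points ((\<lambda>p. 8 * i + p) ` {a, b, c}) j = (if j = i then {a, b, c} else {})" for j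
      using assms(2-4) by (intro block_points_image) auto
    moreover have "card {a, b, c} \<le> 3"
      by (simp add: card_insert_if)
    then have "gf2_indep ag_point {a, b, c}" "gf2_indep ag_point {}"
      using assms(2-4) by (auto intro: gf2_indep_ag_point_card_le_3)
    ultimately show "gf2_indep ag_point (block_points (?C - {8 * i + d}) j)" for j
      by (simp only:) simp
  qed (use C_sub in auto)
  ultimately show ?thesis
    using C_sub unfolding d_def by (intro circuit_vec_indepI) (auto simp: ground_def)
qed

lemma circuit_transversal:
  assumes bound: "\<And>i. i < m \<Longrightarrow> T i \<subseteq> {..<8}"
    and small: "\<And>i. i < m \<Longrightarrow> card (T i) \<le> 3"
    and sum_T: "\<And>i. i < m \<Longrightarrow> (\<Sum>p\<in>T i. ag_point p) = ag_point 0"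
  shows "circuit (ground m s) (rep_indep m s) (insert (8 * m + s) (block_set m T \<union> {8 * m..<8 * m + s}))"
proof -
  let ?R = "block_set m T \<union> {8 * m..<8 * m + s}"
  have R_sub: "?R \<subseteq> {..<8 * m + s}"
    using block_set_subset[of m T, OF bound] by auto
  have R_points: "block_points ?R i = T i" if "i < m" for i
  proof -
    have "block_points {8 * m..<8 * m + s} i = {}"
      using that by (intro block_points_eq_empty) auto
    then show ?thesis
      using block_points_block_set[of m T, OF bound that] by (simp add: block_points_Un)
  qed
  have block_set_low: "n \<in> block_set m T \<Longrightarrow> n < 8 * m" for n
    using block_set_subset[of m T, OF bound] by auto
  have "(\<Sum>y\<in>?R. rep m s y) = apex_vec m s"
  proof
    fix k
    show "(\<Sum>y\<in>?R. rep m s y) k = apex_vec m s k"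
    proof (cases "k < 4 * m")
      case True
      then have "k div 4 < m"
        by (simp add: less_mult_imp_div_less mult.commute)
      with True show ?thesis
        unfolding sum_rep_apply[OF R_sub] by (simp add: R_points sum_T apex_vec_def ag_point_def)
    next
      case False
      then show ?thesis
        unfolding sum_rep_apply[OF R_sub] by (auto simp: apex_vec_def dest: block_set_low)
    qed
  qed
  moreover have "finite ?R"
    using R_sub finite_subset by blast
  moreover have "8 * m + s \<notin> ?R"
    using R_sub by blast
  ultimately have "(\<Sum>y\<in>insert (8 * m + s) ?R. rep m s y) = 0"
    by (simp add: rep_apex)
  moreover have "gf2_indep (rep m s) ?R"
    using R_sub bound small by (intro gf2_indep_rep) (simp_all add: R_points gf2_indep_ag_point_card_le_3)
  ultimately show ?thesis
    using R_sub \<open>finite ?R\<close> \<open>8 * m + s \<notin> ?R\<close>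
    by (intro circuit_vec_indepI[where x = "8 * m + s"]) (auto simp: ground_def)
qed

(* An odd set of points containing p whose vectors sum to the point 0: a plane through 0 and p
   with 0 removed. *)
definition origin_partner :: "nat \<Rightarrow> nat" where
  "origin_partner p = (if p = 1 then 2 else 1)"

definition origin_set :: "nat \<Rightarrow> nat set" where
  "origin_set p = (if p = 0 then {0} else {p, origin_partner p, xor p (origin_partner p)})"

lemma origin_set:
  assumes "p < 8"
  shows "p \<in> origin_set p" "origin_set p \<subseteq> {..<8}" "card (origin_set p) \<le> 3"
    "(\<Sum>q\<in>origin_set p. ag_point q) = ag_point 0"
proof -
  let ?u = "origin_partner p"
  have u: "?u < 8" "?u \<noteq> 0" "p \<noteq> 0 \<Longrightarrow> ?u \<noteq> p"
    by (auto simp: origin_partner_def)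
  have "xor p ?u < 8"
    using assms u(1) by (rule xor_less_8)
  then show "p \<in> origin_set p" "origin_set p \<subseteq> {..<8}" "card (origin_set p) \<le> 3"
    using assms u by (auto simp: origin_set_def card_insert_if)
  show "(\<Sum>q\<in>origin_set p. ag_point q) = ag_point 0"
  proof (cases "p = 0")
    case False
    then have "distinct [p, ?u, xor p ?u]"
      using u by auto
    then have "(\<Sum>q\<in>origin_set p. ag_point q) = ag_point p + ag_point ?u + ag_point (xor p ?u)"
      using False by (simp add: origin_set_def add.assoc)
    also have "\<dots> = ag_point 0"
      by (simp add: ag_point_xor xor_ac)
    finally show ?thesis .
  qed (simp add: origin_set_def)
qed

(* {0, 1, 2, 4} are the points with at most one nonzero binary digit. *)
definition light_set :: "nat \<Rightarrow> nat \<Rightarrow> nat set" where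
  "light_set m s = block_set m (\<lambda>_. {0, 1, 2, 4}) \<union> {8 * m..<8 * m + s}"

definition heavy_set :: "nat \<Rightarrow> nat \<Rightarrow> nat set" where
  "heavy_set m s = insert (8 * m + s) (block_set m (\<lambda>_. {3, 5, 6, 7}))"

lemma gf2_indep_four_ag_points:
  assumes "P \<subseteq> {..<8}" "card P \<le> 4" "(\<Sum>p\<in>P. ag_point p) 1 = 1"
  shows "gf2_indep ag_point P"
  using assms by (intro gf2_indep_ag_point) auto

lemma gf2_indep_light_set: "gf2_indep (rep m s) (light_set m s)"
proof (rule gf2_indep_rep)
  have "block_points (light_set m s) i = {0, 1, 2, 4}" if "i < m" for i
  proof -
    have "block_points {8 * m..<8 * m + s} i = {}"
      using that by (intro block_points_eq_empty) auto
    then show ?thesis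
      using that block_points_block_set[of m "\<lambda>_. {0, 1, 2, 4}" i]
      by (simp add: light_set_def block_points_Un)
  qed
  moreover have "gf2_indep ag_point {0, 1, 2, 4}"
    by (rule gf2_indep_four_ag_points) (auto simp: ag_point_def bit_iff_odd)
  ultimately show "gf2_indep ag_point (block_points (light_set m s) i)" if "i < m" for i
    using that by simp
  show "light_set m s \<subseteq> {..<8 * m + s}"
    using block_set_subset[of m "\<lambda>_. {0, 1, 2, 4}"] by (auto simp: light_set_def)
qed

lemma gf2_indep_heavy_set:
  assumes "0 < s" shows "gf2_indep (rep m s) (heavy_set m s)"
  unfolding heavy_set_def
proof (rule gf2_indep_insert_apex)
  show sub: "block_set m (\<lambda>_. {3, 5, 6, 7}) \<subseteq> {..<8 * m}"
    by (rule block_set_subset) auto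
  have "gf2_indep ag_point {3, 5, 6, 7}"
    by (rule gf2_indep_four_ag_points) (auto simp: ag_point_def bit_iff_odd)
  then show "gf2_indep (rep m s) (block_set m (\<lambda>_. {3, 5, 6, 7}))"
    using sub by (intro gf2_indep_rep) (auto simp: block_points_block_set)
qed (rule assms)

lemma ground_eq_light_heavy: "ground m s = light_set m s \<union> heavy_set m s"
proof (intro equalityI subsetI)
  fix n assume "n \<in> ground m s"
  then consider "n < 8 * m" | "8 * m \<le> n" "n < 8 * m + s" | "n = 8 * m + s"
    by (fastforce simp: ground_def)
  then show "n \<in> light_set m s \<union> heavy_set m s"
  proof cases
    case 1
    have "n mod 8 < 8"
      by simp
    then have "n mod 8 \<in> {0, 1, 2, 4} \<or> n mod 8 \<in> {3, 5, 6, 7}"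
      by (simp only: insert_iff empty_iff simp_thms) linarith
    with 1 show ?thesis
      by (auto simp: light_set_def heavy_set_def mem_block_set_iff)
  qed (auto simp: light_set_def heavy_set_def)
next
  fix n assume "n \<in> light_set m s \<union> heavy_set m s"
  then show "n \<in> ground m s"
    using block_set_subset[of m "\<lambda>_. {0, 1, 2, 4}"] block_set_subset[of m "\<lambda>_. {3, 5, 6, 7}"]
    by (auto simp: light_set_def heavy_set_def ground_def)
qed

lemma card_light_set: "card (light_set m s) = 4 * m + s"
proof -
  have "card (block_set m (\<lambda>_. {0, 1, 2, 4})) = 4 * m"
    by (subst card_block_set) auto
  moreover have "block_set m (\<lambda>_. {0, 1, 2, 4}) \<inter> {8 * m..<8 * m + s} = {}"
    using block_set_subset[of m "\<lambda>_. {0, 1, 2, 4}"] by auto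
  ultimately show ?thesis
    unfolding light_set_def by (subst card_Un_disjoint) (auto simp: block_set_def)
qed

lemma rep_eq_0_beyond_rank:
  assumes "n \<in> ground m s" "4 * m + s \<le> k"
  shows "rep m s n k = 0"
proof (cases "n = 8 * m + s")
  case False
  with assms have "n < 8 * m + s"
    by (auto simp: ground_def)
  with assms(2) show ?thesis
    by (simp add: rep_apply_free_coord)
qed (use assms(2) in \<open>simp add: rep_apex apex_vec_def\<close>)

lemma matroid_rank_rep: "matroid_rank (ground m s) (rep_indep m s) = 4 * m + s"
proof (rule matroid_rank_vec_indep[where B = "light_set m s"])
  show "light_set m s \<subseteq> ground m s"
    using ground_eq_light_heavy by blast
qed (simp_all add: rep_eq_0_beyond_rank gf2_indep_light_set card_light_set)

lemma coverable_rep: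
  assumes "0 < s" shows "coverable 2 (ground m s) (rep_indep m s)"
  unfolding coverable_def
proof (intro exI conjI allI impI)
  let ?I = "\<lambda>i::nat. if i = 0 then light_set m s else heavy_set m s"
  show "rep_indep m s (?I i)" if "i < 2" for i
    using gf2_indep_light_set gf2_indep_heavy_set[OF assms] ground_eq_light_heavy[of m s]
    by (auto simp: vec_indep_def)
  show "ground m s \<subseteq> (\<Union>i<2. ?I i)"
    using ground_eq_light_heavy[of m s] by (auto simp: numeral_2_eq_2 lessThan_Suc)
qed

lemma matroid_connected_rep: "matroid_connected (ground m s) (rep_indep m s)"
  unfolding matroid_connected_def
proof (intro ballI impI)
  fix x y assume x: "x \<in> ground m s" and y: "y \<in> ground m s" and "x \<noteq> y"
  show "\<exists>C. circuit (ground m s) (rep_indep m s) C \<and> x \<in> C \<and> y \<in> C"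
  proof (cases "x < 8 * m \<and> y < 8 * m \<and> x div 8 = y div 8")
    case True
    define i a b where "i = x div 8" and "a = x mod 8" and "b = y mod 8"
    have "i < m"
      using True by (simp add: i_def less_mult_imp_div_less mult.commute)
    have x_eq: "x = 8 * i + a"
      by (simp add: i_def a_def)
    have y_eq: "y = 8 * i + b"
      using True by (simp add: i_def b_def)
    have "a \<noteq> b"
      using \<open>x \<noteq> y\<close> unfolding x_eq y_eq by simp
    define c where "c = (if 0 \<notin> {a, b} then 0 else if 1 \<notin> {a, b} then 1 else (2::nat))"
    have "a < 8" "b < 8" "c < 8" "distinct [a, b, c]"
      using \<open>a \<noteq> b\<close> by (auto simp: a_def b_def c_def)
    from circuit_plane[OF \<open>i < m\<close> this] show ?thesis
      unfolding x_eq y_eq by blast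
  next
    case False
    define \<sigma> where "\<sigma> j = (if x < 8 * m \<and> x div 8 = j then x mod 8 else y mod 8)" for j
    let ?T = "\<lambda>j. origin_set (\<sigma> j)"
    have \<sigma>: "\<sigma> j < 8" for j
      by (simp add: \<sigma>_def)
    have bound: "?T j \<subseteq> {..<8}" for j
      using origin_set(2)[OF \<sigma>] .
    let ?D = "insert (8 * m + s) (block_set m ?T \<union> {8 * m..<8 * m + s})"
    have "circuit (ground m s) (rep_indep m s) ?D"
      using origin_set[OF \<sigma>] by (intro circuit_transversal) auto
    moreover have "n \<in> ?D" if "n \<in> ground m s" "n < 8 * m \<Longrightarrow> \<sigma> (n div 8) = n mod 8" for n
    proof (cases "n < 8 * m")
      case True
      then have "n mod 8 \<in> ?T (n div 8)"
        using that(2) origin_set(1)[of "n mod 8"] by simp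
      with True show ?thesis
        using mem_block_set_iff[of m ?T n] bound by blast
    qed (use that(1) in \<open>auto simp: ground_def\<close>)
    ultimately show ?thesis
      using x y False by (metis \<sigma>_def)
  qed
qed

section \<open>The colour bound\<close>

lemma card_block_colours_le_3:
  fixes c :: "nat \<Rightarrow> 'c"
  assumes no_rainbow: "\<And>C. circuit (ground m s) (rep_indep m s) C \<Longrightarrow> \<not> inj_on c C"
    and cap: "\<forall>x\<in>ground m s. card {y\<in>ground m s. c y = c x} \<le> 3"
    and "i < m"
  shows "card ((\<lambda>p. c (8 * i + p)) ` {..<8}) \<le> 3"
proof (rule card_AG32_colours_le_3)
  fix a b d :: nat
  assume lt: "a < 8" "b < 8" "d < 8"
    and colours: "c (8 * i + a) \<noteq> c (8 * i + b)" "c (8 * i + a) \<noteq> c (8 * i + d)"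
      "c (8 * i + b) \<noteq> c (8 * i + d)"
  then have "distinct [a, b, d]"
    by auto
  let ?e = "xor a (xor b d)"
  have "\<not> inj_on c ((\<lambda>p. 8 * i + p) ` {a, b, d, ?e})"
    using no_rainbow[OF circuit_plane[OF \<open>i < m\<close> lt \<open>distinct [a, b, d]\<close>]] .
  then have "\<not> inj_on (c \<circ> (\<lambda>p. 8 * i + p)) {a, b, d, ?e}"
    by (rule contrapos_nn) (rule inj_on_imageI)
  then show "c (8 * i + ?e) \<in> {c (8 * i + a), c (8 * i + b), c (8 * i + d)}"
    using colours unfolding inj_on_def by auto
next
  fix a :: nat assume "a < 8"
  have "card {p. p < 8 \<and> c (8 * i + p) = c (8 * i + a)} \<le> card {y\<in>ground m s. c y = c (8 * i + a)}"
    by (rule card_inj_on_le[of "\<lambda>p. 8 * i + p"]) (use \<open>i < m\<close> in \<open>auto simp: ground_def\<close>)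
  also have "\<dots> \<le> 3"
    using cap \<open>i < m\<close> \<open>a < 8\<close> by (simp add: ground_def)
  finally show "card {p. p < 8 \<and> c (8 * i + p) = c (8 * i + a)} \<le> 3" .
qed

definition origin_circuit :: "nat \<Rightarrow> nat \<Rightarrow> nat set" where
  "origin_circuit m s = insert (8 * m + s) (block_set m (\<lambda>_. {0}) \<union> {8 * m..<8 * m + s})"

lemma circuit_origin_circuit: "circuit (ground m s) (rep_indep m s) (origin_circuit m s)"
  unfolding origin_circuit_def by (rule circuit_transversal) auto

lemma origin_circuit_memI:
  shows "i < m \<Longrightarrow> 8 * i \<in> origin_circuit m s"
    and "n \<in> ground m s \<Longrightarrow> 8 * m \<le> n \<Longrightarrow> n \<in> origin_circuit m s"
  by (auto simp: origin_circuit_def block_set_def ground_def)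

lemma card_origin_circuit: "card (origin_circuit m s) = m + s + 1"
proof -
  have "card (block_set m (\<lambda>_. {0})) = m"
    by (subst card_block_set) auto
  moreover have "block_set m (\<lambda>_. {0}) \<subseteq> {..<8 * m}"
    by (rule block_set_subset) simp
  ultimately have "card (block_set m (\<lambda>_. {0}) \<union> {8 * m..<8 * m + s}) = m + s"
    by (subst card_Un_disjoint) (auto intro: finite_subset)
  moreover have "8 * m + s \<notin> block_set m (\<lambda>_. {0}) \<union> {8 * m..<8 * m + s}"
    using \<open>block_set m (\<lambda>_. {0}) \<subseteq> {..<8 * m}\<close> by auto
  ultimately show ?thesis
    by (simp add: origin_circuit_def block_set_def)
qed

lemma card_colours_rep_le:
  fixes c :: "nat \<Rightarrow> 'c"
  assumes "rainbow_circuit_free (ground m s) (rep_indep m s) c"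
    and cap: "\<forall>x\<in>ground m s. card {y\<in>ground m s. c y = c x} \<le> 3"
  shows "card (c ` ground m s) \<le> 3 * m + s"
proof -
  have no_rainbow: "\<not> inj_on c C" if "circuit (ground m s) (rep_indep m s) C" for C
    using assms(1) that unfolding rainbow_circuit_free_def by blast
  let ?D = "origin_circuit m s"
  have "finite ?D"
    by (simp add: origin_circuit_def block_set_def)
  have "card (c ` ?D) \<noteq> card ?D"
    using no_rainbow[OF circuit_origin_circuit] \<open>finite ?D\<close> eq_card_imp_inj_on by blast
  then have card_D: "card (c ` ?D) \<le> m + s"
    using card_image_le[OF \<open>finite ?D\<close>, of c] card_origin_circuit[of m s] by linarith
  let ?B = "\<lambda>i. (\<lambda>p. c (8 * i + p)) ` {..<8} - {c (8 * i)}"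
  have "c ` ground m s \<subseteq> c ` ?D \<union> (\<Union>i<m. ?B i)"
  proof
    fix u assume "u \<in> c ` ground m s"
    then obtain n where n: "n \<in> ground m s" "u = c n"
      by blast
    show "u \<in> c ` ?D \<union> (\<Union>i<m. ?B i)"
    proof (cases "n < 8 * m")
      case True
      then have "n div 8 < m"
        by (simp add: less_mult_imp_div_less mult.commute)
      moreover have "c n \<in> (\<lambda>p. c (8 * (n div 8) + p)) ` {..<8}"
        by (intro image_eqI[of _ _ "n mod 8"]) auto
      ultimately show ?thesis
        using n(2) origin_circuit_memI(1)[of "n div 8" m s] by (cases "c n = c (8 * (n div 8))") auto
    qed (use n origin_circuit_memI(2) in auto)
  qed
  then have "card (c ` ground m s) \<le> card (c ` ?D \<union> (\<Union>i<m. ?B i))"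
    using \<open>finite ?D\<close> by (intro card_mono) auto
  also have "\<dots> \<le> card (c ` ?D) + (\<Sum>i<m. card (?B i))"
    using card_Un_le card_UN_le[of "{..<m}" ?B] by (meson add_left_mono finite_lessThan le_trans)
  also have "(\<Sum>i<m. card (?B i)) \<le> (\<Sum>i<m. 2)"
  proof (rule sum_mono)
    fix i assume "i \<in> {..<m}"
    have "c (8 * i) \<in> (\<lambda>p. c (8 * i + p)) ` {..<8}"
      by (intro image_eqI[of _ _ 0]) auto
    then have "card (?B i) = card ((\<lambda>p. c (8 * i + p)) ` {..<8}) - 1"
      by (simp add: card_Diff_singleton)
    also have "\<dots> \<le> 2"
      using card_block_colours_le_3[OF no_rainbow cap] \<open>i \<in> {..<m}\<close> by fastforce
    finally show "card (?B i) \<le> 2" .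
  qed
  finally show ?thesis
    using card_D by simp
qed

theorem corollary8:
  fixes r :: nat
  assumes "r > 0"
  shows "\<exists>(E :: nat set) (indep :: nat set \<Rightarrow> bool).
           matroid E indep \<and> binary E indep \<and> matroid_connected E indep
         \<and> coverable 2 E indep \<and> matroid_rank E indep = r
         \<and> (\<forall>c :: nat \<Rightarrow> nat.
              rainbow_circuit_free E indep c \<and> (\<forall>x\<in>E. card {y\<in>E. c y = c x} \<le> 3)
              \<longrightarrow> int (card (c ` E)) \<le> \<lceil>6 * real r / 7\<rceil>)"
proof -
  define m where "m = (r - 1) div 4"
  define s where "s = r - 4 * m"
  have s: "0 < s" "s \<le> 4" "r = 4 * m + s"
    using assms by (simp_all add: m_def s_def)
  have "int (card (c ` ground m s)) \<le> \<lceil>6 * real r / 7\<rceil>"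
    if "rainbow_circuit_free (ground m s) (rep_indep m s) c"
      and "\<forall>x\<in>ground m s. card {y\<in>ground m s. c y = c x} \<le> 3" for c :: "nat \<Rightarrow> nat"
  proof -
    have "card (c ` ground m s) \<le> 3 * m + s"
      using card_colours_rep_le that by blast
    then have "real (card (c ` ground m s)) - 1 < 6 * real r / 7"
      using s by (simp add: field_simps)
    then show ?thesis
      by (simp add: le_ceiling_iff)
  qed
  moreover have "matroid (ground m s) (rep_indep m s)"
    by (simp add: matroid_vec_indep)
  ultimately show ?thesis
    using binary_vec_indep matroid_connected_rep coverable_rep[OF \<open>0 < s\<close>] matroid_rank_rep s(3)
    by blast
qed

end
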